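(* Let $(X,\mu)$ be a $\sigma$-finite measure space, let $S:L^1(X)\to L^1(X)$ be a semi-doubly stochastic operator, and let $F$ be a finite dimensional subspace of $L^1(X)$. Then there exists a sequence $(I_n)_{n\ge1}$ of semi-doubly stochastic integral operators on $L^1(X)$ which converges to $S$ on $F$, i.e. $\|I_nf-Sf\|_1\to0$ for every $f\in F$.
   Context: A semi-doubly stochastic operator is a positive linear operator $T:L^1(X)\to L^1(X)$ with $\int_X Tf\,d\mu=\int_X f\,d\mu$ for all $f\in L^1(X)$ and $\int_X T^*\chi_E\,d\mu\le\mu(E)$ for every measurable $E$ with $\mu(E)<\infty$, where $T^*:L^\infty(X)\to L^\infty(X)$ is the Banach adjoint. A semi-doubly stochastic kernel is a measurable function $K:X\times X\to[0,\infty)$ with $\int_X K(x,y)\,d\mu(x)=1$ for almost all $y$ and $\int_X K(x,y)\,d\mu(y)\le1$ for almost all $x$. A semi-doubly stochastic integral operator is an operator of the form $(If)(x)=\int_X K(x,y)f(y)\,d\mu(y)$ with $K$ a semi-doubly stochastic kernel. *)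

theory Defs
  imports "HOL-Analysis.Analysis"
begin

text \<open>Elements of L^1(X) are represented by integrable real functions; an operator on
L^1(X) is a map on functions which sends integrable functions to integrable ones
and respects almost-everywhere equality.\<close>

definition L1_operator :: "'a measure \<Rightarrow> (('a \<Rightarrow> real) \<Rightarrow> ('a \<Rightarrow> real)) \<Rightarrow> bool" where
  "L1_operator M T \<longleftrightarrow>
     (\<forall>f. integrable M f \<longrightarrow> integrable M (T f)) \<and>
     (\<forall>f g. integrable M f \<longrightarrow> integrable M g \<longrightarrow> (AE x in M. f x = g x) \<longrightarrow>
            (AE x in M. T f x = T g x))"

definition L1_linear :: "'a measure \<Rightarrow> (('a \<Rightarrow> real) \<Rightarrow> ('a \<Rightarrow> real)) \<Rightarrow> bool" where
  "L1_linear M T \<longleftrightarrow>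
     (\<forall>f g a b. integrable M f \<longrightarrow> integrable M g \<longrightarrow>
        (AE x in M. T (\<lambda>y. a * f y + b * g y) x = a * T f x + b * T g x))"

definition L1_positive :: "'a measure \<Rightarrow> (('a \<Rightarrow> real) \<Rightarrow> ('a \<Rightarrow> real)) \<Rightarrow> bool" where
  "L1_positive M T \<longleftrightarrow>
     (\<forall>f. integrable M f \<longrightarrow> (AE x in M. 0 \<le> f x) \<longrightarrow> (AE x in M. 0 \<le> T f x))"

text \<open>g represents the Banach adjoint applied to h:
  \<open>T^* h = g\<close> in L^\<infinity>.\<close>
definition adjoint_value ::
  "'a measure \<Rightarrow> (('a \<Rightarrow> real) \<Rightarrow> ('a \<Rightarrow> real)) \<Rightarrow> ('a \<Rightarrow> real) \<Rightarrow> ('a \<Rightarrow> real) \<Rightarrow> bool" where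
  "adjoint_value M T h g \<longleftrightarrow>
     g \<in> borel_measurable M \<and> (\<exists>C. AE x in M. \<bar>g x\<bar> \<le> C) \<and>
     (\<forall>f. integrable M f \<longrightarrow> (\<integral>x. T f x * h x \<partial>M) = (\<integral>x. f x * g x \<partial>M))"

definition semi_doubly_stochastic_op ::
  "'a measure \<Rightarrow> (('a \<Rightarrow> real) \<Rightarrow> ('a \<Rightarrow> real)) \<Rightarrow> bool" where
  "semi_doubly_stochastic_op M T \<longleftrightarrow>
     L1_operator M T \<and> L1_linear M T \<and> L1_positive M T \<and>
     (\<forall>f. integrable M f \<longrightarrow> (\<integral>x. T f x \<partial>M) = (\<integral>x. f x \<partial>M)) \<and>
     (\<forall>E \<in> sets M. emeasure M E < \<infinity> \<longrightarrow>
        (\<exists>g. adjoint_value M T (indicator E) g \<and>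
             (\<integral>\<^sup>+x. ennreal (g x) \<partial>M) \<le> emeasure M E))"

definition semi_doubly_stochastic_kernel :: "'a measure \<Rightarrow> ('a \<Rightarrow> 'a \<Rightarrow> real) \<Rightarrow> bool" where
  "semi_doubly_stochastic_kernel M K \<longleftrightarrow>
     (\<lambda>(x, y). K x y) \<in> borel_measurable (M \<Otimes>\<^sub>M M) \<and>
     (\<forall>x y. 0 \<le> K x y) \<and>
     (AE y in M. (\<integral>\<^sup>+x. ennreal (K x y) \<partial>M) = 1) \<and>
     (AE x in M. (\<integral>\<^sup>+y. ennreal (K x y) \<partial>M) \<le> 1)"

definition integral_operator :: "'a measure \<Rightarrow> ('a \<Rightarrow> 'a \<Rightarrow> real) \<Rightarrow> ('a \<Rightarrow> real) \<Rightarrow> ('a \<Rightarrow> real)" where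
  "integral_operator M K f = (\<lambda>x. \<integral>y. K x y * f y \<partial>M)"

definition finite_dim_L1_subspace :: "'a measure \<Rightarrow> ('a \<Rightarrow> real) set \<Rightarrow> bool" where
  "finite_dim_L1_subspace M F \<longleftrightarrow>
     (\<exists>(N::nat) fs. (\<forall>i<N. integrable M (fs i)) \<and>
        F = {(\<lambda>x. \<Sum>i<N. c i * fs i x) | c. True})"

end

theory Submission
  imports Defs
begin

text \<open>
  By sigma-finiteness, finitely many integrable simple functions are step functions on one
  countable partition of X into cells C_j of finite measure. The matrix
  a(l,j) = (integral over C_l of S(indicator C_j)) has column sums mu(C_j), because S preserves
  integrals, and row sums at most mu(C_l), by the adjoint condition. Hence
  K(x,y) = a(l,j) / (mu(C_l) mu(C_j)) for x in C_l, y in C_j is a semi-doubly stochastic kernel,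
  and on step functions g its integral operator is E(S g), where E averages over the cells.
  Since S, E and I_K are L1-contractions,
  |I_K f - S f| <= |f - g| + |E(S g - u)| + |u - S g| + |S(g - f)| <= 4 delta
  in L1-norm, for step functions g, u with |f - g| <= delta and |S g - u| <= delta.
  Doing this for a basis of F and letting delta tend to 0 gives the kernels; linearity of
  S and of integral operators handles all of F.
\<close>

section \<open>L1 distance\<close>

definition L1_dist :: "'a measure \<Rightarrow> ('a \<Rightarrow> real) \<Rightarrow> ('a \<Rightarrow> real) \<Rightarrow> ennreal" where
  "L1_dist M f g = (\<integral>\<^sup>+x. ennreal \<bar>f x - g x\<bar> \<partial>M)"

lemma L1_dist_commute: "L1_dist M f g = L1_dist M g f"
  by (simp add: L1_dist_def abs_minus_commute)

lemma L1_dist_cong_AE: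
  assumes "AE x in M. f x = f' x" and "AE x in M. g x = g' x"
  shows "L1_dist M f g = L1_dist M f' g'"
  unfolding L1_dist_def using assms by (intro nn_integral_cong_AE) auto

lemma L1_dist_triangle:
  assumes [measurable]: "f \<in> borel_measurable M" "g \<in> borel_measurable M" "h \<in> borel_measurable M"
  shows "L1_dist M f h \<le> L1_dist M f g + L1_dist M g h"
proof -
  have "L1_dist M f h \<le> (\<integral>\<^sup>+x. ennreal \<bar>f x - g x\<bar> + ennreal \<bar>g x - h x\<bar> \<partial>M)"
    unfolding L1_dist_def
    by (intro nn_integral_mono) (simp add: ennreal_plus[symmetric] del: ennreal_plus)
  also have "\<dots> = L1_dist M f g + L1_dist M g h"
    unfolding L1_dist_def by (intro nn_integral_add) auto
  finally show ?thesis .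
qed

lemma L1_dist_lincomb_le:
  fixes N :: nat
  assumes [measurable]: "\<And>i. i < N \<Longrightarrow> p i \<in> borel_measurable M" "\<And>i. i < N \<Longrightarrow> q i \<in> borel_measurable M"
  shows "L1_dist M (\<lambda>x. \<Sum>i<N. c i * p i x) (\<lambda>x. \<Sum>i<N. c i * q i x)
           \<le> (\<Sum>i<N. ennreal \<bar>c i\<bar> * L1_dist M (p i) (q i))"
proof -
  have "L1_dist M (\<lambda>x. \<Sum>i<N. c i * p i x) (\<lambda>x. \<Sum>i<N. c i * q i x)
      \<le> (\<integral>\<^sup>+x. (\<Sum>i<N. ennreal \<bar>c i\<bar> * ennreal \<bar>p i x - q i x\<bar>) \<partial>M)"
    unfolding L1_dist_def
  proof (intro nn_integral_mono)
    fix x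
    have "\<bar>(\<Sum>i<N. c i * p i x) - (\<Sum>i<N. c i * q i x)\<bar> \<le> (\<Sum>i<N. \<bar>c i\<bar> * \<bar>p i x - q i x\<bar>)"
      by (simp add: sum_subtractf[symmetric] right_diff_distrib[symmetric] abs_mult[symmetric])
    then show "ennreal \<bar>(\<Sum>i<N. c i * p i x) - (\<Sum>i<N. c i * q i x)\<bar>
        \<le> (\<Sum>i<N. ennreal \<bar>c i\<bar> * ennreal \<bar>p i x - q i x\<bar>)"
      by (simp add: ennreal_leI ennreal_mult[symmetric])
  qed
  also have "\<dots> = (\<Sum>i<N. ennreal \<bar>c i\<bar> * L1_dist M (p i) (q i))"
    unfolding L1_dist_def by (subst nn_integral_sum) (auto intro!: sum.cong nn_integral_cmult)
  finally show ?thesis .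
qed

lemma ennreal_integral_le_nn_integral:
  fixes f :: "'a \<Rightarrow> real"
  shows "ennreal (\<integral>x. f x \<partial>M) \<le> (\<integral>\<^sup>+x. ennreal (f x) \<partial>M)"
proof (cases "integrable M f")
  case True
  then have "ennreal (\<integral>x. f x \<partial>M) \<le> ennreal (\<integral>x. max 0 (f x) \<partial>M)"
    by (intro ennreal_leI integral_mono) auto
  also have "\<dots> = (\<integral>\<^sup>+x. ennreal (f x) \<partial>M)"
    using True by (subst nn_integral_eq_integral[symmetric]) (auto simp: ennreal_max_0)
  finally show ?thesis .
qed (simp add: not_integrable_integral_eq)

section \<open>Integral operators with semi-doubly stochastic kernels\<close>

lemma semi_doubly_stochastic_kernelD:
  assumes "semi_doubly_stochastic_kernel M K"
  shows semi_doubly_stochastic_kernel_measurable: "(\<lambda>(x, y). K x y) \<in> borel_measurable (M \<Otimes>\<^sub>M M)"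
    and semi_doubly_stochastic_kernel_nonneg: "0 \<le> K x y"
    and semi_doubly_stochastic_kernel_columns: "AE y in M. (\<integral>\<^sup>+x. ennreal (K x y) \<partial>M) = 1"
  using assms unfolding semi_doubly_stochastic_kernel_def by auto

context sigma_finite_measure
begin

lemma measurable_kernel_mult:
  assumes "semi_doubly_stochastic_kernel M K" and [measurable]: "f \<in> borel_measurable M"
  shows "(\<lambda>(x, y). K x y * f y) \<in> borel_measurable (M \<Otimes>\<^sub>M M)"
  using semi_doubly_stochastic_kernel_measurable[OF assms(1)] by measurable

lemma integral_operator_measurable:
  "semi_doubly_stochastic_kernel M K \<Longrightarrow> f \<in> borel_measurable M \<Longrightarrow>
    integral_operator M K f \<in> borel_measurable M"
  unfolding integral_operator_def
  by (rule borel_measurable_lebesgue_integral) (simp add: measurable_kernel_mult)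

lemma nn_integral_kernel_abs:
  assumes K: "semi_doubly_stochastic_kernel M K" and f: "f \<in> borel_measurable M"
  shows "(\<integral>\<^sup>+x. (\<integral>\<^sup>+y. ennreal (K x y * \<bar>f y\<bar>) \<partial>M) \<partial>M) = (\<integral>\<^sup>+y. ennreal \<bar>f y\<bar> \<partial>M)"
proof -
  interpret MM: pair_sigma_finite M M by unfold_locales
  note K_nonneg = semi_doubly_stochastic_kernel_nonneg[OF K]
  note [measurable] = semi_doubly_stochastic_kernel_measurable[OF K] f
  have "(\<lambda>(x, y). ennreal (K x y * \<bar>f y\<bar>)) \<in> borel_measurable (M \<Otimes>\<^sub>M M)"
    by measurable
  from MM.Fubini'[OF this]
  have "(\<integral>\<^sup>+x. (\<integral>\<^sup>+y. ennreal (K x y * \<bar>f y\<bar>) \<partial>M) \<partial>M)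
      = (\<integral>\<^sup>+y. (\<integral>\<^sup>+x. ennreal (K x y * \<bar>f y\<bar>) \<partial>M) \<partial>M)"
    by simp
  also have "\<dots> = (\<integral>\<^sup>+y. ennreal \<bar>f y\<bar> * (\<integral>\<^sup>+x. ennreal (K x y) \<partial>M) \<partial>M)"
    by (intro nn_integral_cong)
       (simp add: ennreal_mult K_nonneg nn_integral_cmult[symmetric] mult.commute)
  also have "\<dots> = (\<integral>\<^sup>+y. ennreal \<bar>f y\<bar> \<partial>M)"
    using semi_doubly_stochastic_kernel_columns[OF K] by (intro nn_integral_cong_AE) auto
  finally show ?thesis .
qed

lemma AE_integrable_kernel_row:
  assumes K: "semi_doubly_stochastic_kernel M K" and f: "integrable M f"
  shows "AE x in M. integrable M (\<lambda>y. K x y * f y)"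
proof -
  note K_nonneg = semi_doubly_stochastic_kernel_nonneg[OF K]
  note [measurable] = semi_doubly_stochastic_kernel_measurable[OF K] borel_measurable_integrable[OF f]
  have "(\<integral>\<^sup>+x. (\<integral>\<^sup>+y. ennreal (K x y * \<bar>f y\<bar>) \<partial>M) \<partial>M) \<noteq> \<infinity>"
    using nn_integral_kernel_abs[OF K] f by (simp add: integrable_iff_bounded less_top)
  then have "AE x in M. (\<integral>\<^sup>+y. ennreal (K x y * \<bar>f y\<bar>) \<partial>M) \<noteq> \<infinity>"
    by (intro nn_integral_PInf_AE) measurable
  with AE_space show ?thesis
  proof eventually_elim
    case (elim x)
    have "(\<lambda>y. K x y * f y) \<in> borel_measurable M"
      using measurable_Pair2[OF measurable_kernel_mult[OF K borel_measurable_integrable[OF f]]] elim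
      by simp
    moreover have "(\<integral>\<^sup>+y. ennreal (norm (K x y * f y)) \<partial>M) < \<infinity>"
      using elim K_nonneg by (simp add: abs_mult less_top)
    ultimately show "integrable M (\<lambda>y. K x y * f y)"
      by (rule integrableI_bounded)
  qed
qed

lemma integral_operator_diff_AE:
  assumes K: "semi_doubly_stochastic_kernel M K" and f: "integrable M f" and g: "integrable M g"
  shows "AE x in M. integral_operator M K (\<lambda>y. f y - g y) x
                      = integral_operator M K f x - integral_operator M K g x"
  using AE_integrable_kernel_row[OF K f] AE_integrable_kernel_row[OF K g]
  by eventually_elim (simp add: integral_operator_def right_diff_distrib)

lemma integral_operator_sum_AE:
  fixes N :: nat
  assumes K: "semi_doubly_stochastic_kernel M K" and f: "\<And>i. i < N \<Longrightarrow> integrable M (f i)"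
  shows "AE x in M. integral_operator M K (\<lambda>y. \<Sum>i<N. c i * f i y) x
                      = (\<Sum>i<N. c i * integral_operator M K (f i) x)"
proof -
  have "AE x in M. \<forall>i\<in>{..<N}. integrable M (\<lambda>y. K x y * f i y)"
    using AE_integrable_kernel_row[OF K f] by (intro AE_finite_allI) auto
  then show ?thesis
    by eventually_elim (simp add: integral_operator_def sum_distrib_left mult_ac)
qed

lemma nn_integral_abs_integral_operator_le:
  assumes K: "semi_doubly_stochastic_kernel M K" and f: "f \<in> borel_measurable M"
  shows "(\<integral>\<^sup>+x. ennreal \<bar>integral_operator M K f x\<bar> \<partial>M) \<le> (\<integral>\<^sup>+x. ennreal \<bar>f x\<bar> \<partial>M)"
proof -
  have "ennreal \<bar>integral_operator M K f x\<bar> \<le> (\<integral>\<^sup>+y. ennreal (K x y * \<bar>f y\<bar>) \<partial>M)" for x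
  proof (cases "integrable M (\<lambda>y. K x y * f y)")
    case True
    then show ?thesis
      using integral_norm_bound_ennreal[OF True] semi_doubly_stochastic_kernel_nonneg[OF K]
      by (simp add: integral_operator_def abs_mult)
  qed (simp add: integral_operator_def not_integrable_integral_eq)
  then have "(\<integral>\<^sup>+x. ennreal \<bar>integral_operator M K f x\<bar> \<partial>M)
      \<le> (\<integral>\<^sup>+x. (\<integral>\<^sup>+y. ennreal (K x y * \<bar>f y\<bar>) \<partial>M) \<partial>M)"
    by (intro nn_integral_mono)
  then show ?thesis
    using nn_integral_kernel_abs[OF K f] by simp
qed

lemma L1_dist_integral_operator_le:
  assumes K: "semi_doubly_stochastic_kernel M K" and f: "integrable M f" and g: "integrable M g"
  shows "L1_dist M (integral_operator M K f) (integral_operator M K g) \<le> L1_dist M f g"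
proof -
  have "L1_dist M (integral_operator M K f) (integral_operator M K g)
      = (\<integral>\<^sup>+x. ennreal \<bar>integral_operator M K (\<lambda>y. f y - g y) x\<bar> \<partial>M)"
    unfolding L1_dist_def using integral_operator_diff_AE[OF K f g]
    by (intro nn_integral_cong_AE) (auto elim!: eventually_mono)
  also have "\<dots> \<le> L1_dist M f g"
    unfolding L1_dist_def using f g by (intro nn_integral_abs_integral_operator_le[OF K]) auto
  finally show ?thesis .
qed

end

section \<open>Semi-doubly stochastic operators\<close>

locale semi_doubly_stochastic_operator =
  fixes M :: "'a measure" and S :: "('a \<Rightarrow> real) \<Rightarrow> ('a \<Rightarrow> real)"
  assumes semi_doubly_stochastic: "semi_doubly_stochastic_op M S"
begin

lemma integrable_S: "integrable M f \<Longrightarrow> integrable M (S f)"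
  using semi_doubly_stochastic unfolding semi_doubly_stochastic_op_def L1_operator_def by blast

lemma S_cong_AE:
  "integrable M f \<Longrightarrow> integrable M g \<Longrightarrow> AE x in M. f x = g x \<Longrightarrow> AE x in M. S f x = S g x"
  using semi_doubly_stochastic unfolding semi_doubly_stochastic_op_def L1_operator_def by blast

lemma S_linear_AE:
  "integrable M f \<Longrightarrow> integrable M g \<Longrightarrow>
    AE x in M. S (\<lambda>y. a * f y + b * g y) x = a * S f x + b * S g x"
  using semi_doubly_stochastic unfolding semi_doubly_stochastic_op_def L1_linear_def by blast

lemma S_nonneg_AE: "integrable M f \<Longrightarrow> AE x in M. 0 \<le> f x \<Longrightarrow> AE x in M. 0 \<le> S f x"
  using semi_doubly_stochastic unfolding semi_doubly_stochastic_op_def L1_positive_def by blast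

lemma integral_S: "integrable M f \<Longrightarrow> (\<integral>x. S f x \<partial>M) = (\<integral>x. f x \<partial>M)"
  using semi_doubly_stochastic unfolding semi_doubly_stochastic_op_def by blast

lemma S_adjoint_indicator:
  "E \<in> sets M \<Longrightarrow> emeasure M E < \<infinity> \<Longrightarrow>
    \<exists>g. adjoint_value M S (indicator E) g \<and> (\<integral>\<^sup>+x. ennreal (g x) \<partial>M) \<le> emeasure M E"
  using semi_doubly_stochastic unfolding semi_doubly_stochastic_op_def by blast

lemma S_zero_AE: "AE x in M. S (\<lambda>y. 0) x = 0"
  using S_linear_AE[of "\<lambda>y. 0" "\<lambda>y. 0" 0 0] by simp

lemma S_diff_AE:
  "integrable M f \<Longrightarrow> integrable M g \<Longrightarrow> AE x in M. S (\<lambda>y. f y - g y) x = S f x - S g x"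
  using S_linear_AE[of f g 1 "-1"] by simp

lemma S_sum_AE:
  fixes N :: nat
  assumes "\<And>i. i < N \<Longrightarrow> integrable M (f i)"
  shows "AE x in M. S (\<lambda>y. \<Sum>i<N. c i * f i y) x = (\<Sum>i<N. c i * S (f i) x)"
  using assms
proof (induction N)
  case 0
  then show ?case using S_zero_AE by simp
next
  case (Suc N)
  have IH: "AE x in M. S (\<lambda>y. \<Sum>i<N. c i * f i y) x = (\<Sum>i<N. c i * S (f i) x)"
    using Suc by simp
  have "AE x in M. S (\<lambda>y. 1 * (\<Sum>i<N. c i * f i y) + c N * f N y) x
                   = 1 * S (\<lambda>y. \<Sum>i<N. c i * f i y) x + c N * S (f N) x"
    using Suc.prems by (intro S_linear_AE) auto
  with IH show ?case
    by eventually_elim simp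
qed

lemma abs_S_le_S_abs_AE:
  assumes h: "integrable M h"
  shows "AE x in M. \<bar>S h x\<bar> \<le> S (\<lambda>y. \<bar>h y\<bar>) x"
proof -
  have habs: "integrable M (\<lambda>y. \<bar>h y\<bar>)"
    using h by auto
  have "AE x in M. 0 \<le> S (\<lambda>y. 1 * \<bar>h y\<bar> + 1 * h y) x"
    and "AE x in M. 0 \<le> S (\<lambda>y. 1 * \<bar>h y\<bar> + -1 * h y) x"
    using h by (intro S_nonneg_AE; auto)+
  with S_linear_AE[OF habs h, of 1 1] S_linear_AE[OF habs h, of 1 "-1"]
  show ?thesis
    by eventually_elim auto
qed

lemma L1_dist_S_le:
  assumes f: "integrable M f" and g: "integrable M g"
  shows "L1_dist M (S f) (S g) \<le> L1_dist M f g"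
proof -
  define h where "h = (\<lambda>y. f y - g y)"
  have h: "integrable M h" and habs: "integrable M (\<lambda>y. \<bar>h y\<bar>)"
    using f g by (auto simp: h_def)
  have "L1_dist M (S f) (S g) = (\<integral>\<^sup>+x. ennreal \<bar>S h x\<bar> \<partial>M)"
    unfolding L1_dist_def h_def using S_diff_AE[OF f g]
    by (intro nn_integral_cong_AE) (auto elim!: eventually_mono)
  also have "\<dots> \<le> (\<integral>\<^sup>+x. ennreal (S (\<lambda>y. \<bar>h y\<bar>) x) \<partial>M)"
    using abs_S_le_S_abs_AE[OF h] by (intro nn_integral_mono_AE) (auto elim!: eventually_mono)
  also have "\<dots> = ennreal (\<integral>x. \<bar>h x\<bar> \<partial>M)"
    using abs_S_le_S_abs_AE[OF h] integrable_S[OF habs] integral_S[OF habs]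
    by (subst nn_integral_eq_integral) (auto elim!: eventually_mono)
  also have "\<dots> = L1_dist M f g"
    unfolding L1_dist_def using habs by (subst nn_integral_eq_integral) (auto simp: h_def)
  finally show ?thesis .
qed

end

section \<open>Countable partitions into cells of finite measure\<close>

locale finite_measure_partition =
  fixes M :: "'a measure" and C :: "nat \<Rightarrow> 'a set"
  assumes sets_cell: "C k \<in> sets M"
    and disjoint_cells: "disjoint_family C"
    and cells_cover: "(\<Union>k. C k) = space M"
    and emeasure_cell_finite: "emeasure M (C k) < \<infinity>"
begin

sublocale sigma_finite_measure M
proof
  show "\<exists>A. countable A \<and> A \<subseteq> sets M \<and> \<Union>A = space M \<and> (\<forall>a\<in>A. emeasure M a \<noteq> \<infinity>)"
    using sets_cell cells_cover emeasure_cell_finite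
    by (intro exI[of _ "range C"]) (auto simp: less_top)
qed

definition cell_index :: "'a \<Rightarrow> nat" where
  "cell_index x = (LEAST k. x \<in> C k)"

definition cell_kernel :: "(nat \<Rightarrow> nat \<Rightarrow> real) \<Rightarrow> 'a \<Rightarrow> 'a \<Rightarrow> real" where
  "cell_kernel \<kappa> x y = \<kappa> (cell_index x) (cell_index y)"

definition cell_step_function :: "('a \<Rightarrow> real) \<Rightarrow> bool" where
  "cell_step_function g \<longleftrightarrow> (\<exists>n \<gamma>. \<forall>y\<in>space M. g y = (\<Sum>j<n. \<gamma> j * indicator (C j) y))"

lemma cell_subset_space: "C k \<subseteq> space M"
  unfolding cells_cover[symmetric] by blast

lemma cell_index_eq:
  assumes "x \<in> C k"
  shows "cell_index x = k"
  unfolding cell_index_def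
proof (rule Least_equality)
  show "x \<in> C k" by fact
  fix j assume "x \<in> C j"
  with assms disjoint_cells have "j = k"
    unfolding disjoint_family_on_def by blast
  then show "k \<le> j" by simp
qed

lemma in_cell_index:
  assumes "x \<in> space M"
  shows "x \<in> C (cell_index x)"
proof -
  obtain k where "x \<in> C k"
    using assms unfolding cells_cover[symmetric] by blast
  then show ?thesis
    using cell_index_eq by simp
qed

lemma cell_index_iff: "x \<in> space M \<Longrightarrow> x \<in> C k \<longleftrightarrow> cell_index x = k"
  by (metis cell_index_eq in_cell_index)

lemma measurable_cell_index: "cell_index \<in> measurable M (count_space UNIV)"
proof (subst measurable_count_space_eq2_countable, safe)
  fix k
  have "cell_index -` {k} \<inter> space M = C k"
    using cell_subset_space by (auto simp: cell_index_iff intro: cell_index_eq)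
  then show "cell_index -` {k} \<inter> space M \<in> sets M"
    using sets_cell by simp
qed auto

lemma measurable_cell_function: "(\<lambda>x. \<phi> (cell_index x)) \<in> borel_measurable M"
  by (rule measurable_compose_countable[where f="\<lambda>i x. \<phi> i", OF _ measurable_cell_index]) simp

lemma measurable_cell_kernel: "(\<lambda>(x, y). cell_kernel \<kappa> x y) \<in> borel_measurable (M \<Otimes>\<^sub>M M)"
proof -
  have "(\<lambda>z. cell_index (fst z)) \<in> measurable (M \<Otimes>\<^sub>M M) (count_space UNIV)"
    using measurable_cell_index by measurable
  then have "(\<lambda>z. (\<lambda>i z. \<kappa> i (cell_index (snd z))) (cell_index (fst z)) z) \<in> borel_measurable (M \<Otimes>\<^sub>M M)"
    by (rule measurable_compose_countable[rotated])
       (rule measurable_compose[OF measurable_snd measurable_cell_function])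
  then show ?thesis
    by (simp add: cell_kernel_def case_prod_beta)
qed

lemma nn_integral_sum_cells:
  assumes "F \<in> borel_measurable M"
  shows "(\<integral>\<^sup>+x. F x \<partial>M) = (\<Sum>l. \<integral>\<^sup>+x\<in>C l. F x \<partial>M)"
proof -
  have "(\<integral>\<^sup>+x. F x \<partial>M) = (\<integral>\<^sup>+x\<in>(\<Union>l. C l). F x \<partial>M)"
    using cells_cover by (intro nn_integral_cong) simp
  also have "\<dots> = (\<Sum>l. \<integral>\<^sup>+x\<in>C l. F x \<partial>M)"
    using assms sets_cell disjoint_cells by (rule nn_integral_disjoint_family)
  finally show ?thesis .
qed

lemma nn_integral_cell_function:
  "(\<integral>\<^sup>+x. \<phi> (cell_index x) \<partial>M) = (\<Sum>l. \<phi> l * emeasure M (C l))"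
proof -
  have "(\<integral>\<^sup>+x. \<phi> (cell_index x) \<partial>M) = (\<Sum>l. \<integral>\<^sup>+x. \<phi> l * indicator (C l) x \<partial>M)"
    unfolding nn_integral_sum_cells[OF measurable_cell_function] using cell_index_iff
    by (intro suminf_cong nn_integral_cong) (auto split: split_indicator)
  also have "\<dots> = (\<Sum>l. \<phi> l * emeasure M (C l))"
    using sets_cell by (simp add: nn_integral_cmult_indicator)
  finally show ?thesis .
qed

lemma AE_emeasure_cell_nonzero: "AE x in M. emeasure M (C (cell_index x)) \<noteq> 0"
proof (rule AE_I')
  show "(\<Union>l\<in>{l. emeasure M (C l) = 0}. C l) \<in> null_sets M"
    using sets_cell by (intro null_sets_UN') auto
  show "{x \<in> space M. \<not> emeasure M (C (cell_index x)) \<noteq> 0} \<subseteq> (\<Union>l\<in>{l. emeasure M (C l) = 0}. C l)"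
    using in_cell_index by blast
qed

text \<open>Null cells are ignored: they only carry the kernel on a null set.\<close>

lemma semi_doubly_stochastic_cell_kernel:
  assumes nonneg: "\<And>l j. 0 \<le> \<kappa> l j"
    and columns: "\<And>j. emeasure M (C j) \<noteq> 0 \<Longrightarrow> (\<Sum>l. ennreal (\<kappa> l j) * emeasure M (C l)) = 1"
    and rows: "\<And>l. emeasure M (C l) \<noteq> 0 \<Longrightarrow> (\<Sum>j. ennreal (\<kappa> l j) * emeasure M (C j)) \<le> 1"
  shows "semi_doubly_stochastic_kernel M (cell_kernel \<kappa>)"
  unfolding semi_doubly_stochastic_kernel_def
proof (intro conjI allI)
  show "AE y in M. (\<integral>\<^sup>+x. ennreal (cell_kernel \<kappa> x y) \<partial>M) = 1"
    using AE_emeasure_cell_nonzero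
  proof eventually_elim
    case (elim y)
    then show ?case
      using nn_integral_cell_function[of "\<lambda>l. ennreal (\<kappa> l (cell_index y))"]
      by (simp add: cell_kernel_def columns)
  qed
  show "AE x in M. (\<integral>\<^sup>+y. ennreal (cell_kernel \<kappa> x y) \<partial>M) \<le> 1"
    using AE_emeasure_cell_nonzero
  proof eventually_elim
    case (elim x)
    then show ?case
      using nn_integral_cell_function[of "\<lambda>j. ennreal (\<kappa> (cell_index x) j)"]
      by (simp add: cell_kernel_def rows)
  qed
qed (simp_all add: measurable_cell_kernel cell_kernel_def nonneg)

lemma integrable_cell_indicator: "integrable M (indicator (C j) :: 'a \<Rightarrow> real)"
  using sets_cell emeasure_cell_finite by simp

lemma integrable_cell_step_function:
  assumes "cell_step_function g"
  shows "integrable M g"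
proof -
  obtain n \<gamma> where g: "\<And>y. y \<in> space M \<Longrightarrow> g y = (\<Sum>j<n. \<gamma> j * indicator (C j) y)"
    using assms unfolding cell_step_function_def by blast
  have "integrable M (\<lambda>y. \<Sum>j<n. \<gamma> j * indicator (C j) y)"
    using integrable_cell_indicator by (simp del: sum_mult_indicator)
  moreover have "integrable M g \<longleftrightarrow> integrable M (\<lambda>y. \<Sum>j<n. \<gamma> j * indicator (C j) y)"
    by (rule Bochner_Integration.integrable_cong) (simp_all add: g)
  ultimately show ?thesis
    by blast
qed

lemma integral_operator_cell_kernel_step:
  assumes x: "x \<in> space M" and g: "\<And>y. y \<in> space M \<Longrightarrow> g y = (\<Sum>j<n. \<gamma> j * indicator (C j) y)"
  shows "integral_operator M (cell_kernel \<kappa>) g x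
           = (\<Sum>j<n. \<gamma> j * \<kappa> (cell_index x) j * measure M (C j))"
proof -
  have "integral_operator M (cell_kernel \<kappa>) g x
      = (\<integral>y. (\<Sum>j<n. \<gamma> j * \<kappa> (cell_index x) j * indicator (C j) y) \<partial>M)"
    unfolding integral_operator_def
  proof (rule Bochner_Integration.integral_cong[OF refl])
    fix y assume y: "y \<in> space M"
    show "cell_kernel \<kappa> x y * g y = (\<Sum>j<n. \<gamma> j * \<kappa> (cell_index x) j * indicator (C j) y)"
      unfolding g[OF y] sum_distrib_left cell_kernel_def
      using cell_index_iff[OF y] by (intro sum.cong) (auto split: split_indicator)
  qed
  also have "\<dots> = (\<Sum>j<n. \<gamma> j * \<kappa> (cell_index x) j * measure M (C j))"
    using sets_cell emeasure_cell_finite cell_subset_space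
    by (subst Bochner_Integration.integral_sum) (auto simp: Int_absorb2 less_top)
  finally show ?thesis .
qed

lemma emeasure_cell: "emeasure M (C k) = ennreal (measure M (C k))"
  using emeasure_cell_finite by (simp add: emeasure_eq_ennreal_measure less_top)

text \<open>The kernel of the conditional expectation onto the cells; on null cells it takes the junk
  value \<open>1 / 0 = 0\<close>, which only matters on a null set.\<close>

definition averaging :: "nat \<Rightarrow> nat \<Rightarrow> real" where
  "averaging l j = (if l = j then 1 / measure M (C l) else 0)"

lemma semi_doubly_stochastic_averaging_kernel:
  "semi_doubly_stochastic_kernel M (cell_kernel averaging)"
proof (rule semi_doubly_stochastic_cell_kernel)
  fix j
  assume "emeasure M (C j) \<noteq> 0"
  then have "ennreal (averaging j j) * emeasure M (C j) = 1"
    by (simp add: averaging_def emeasure_cell ennreal_mult[symmetric])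
  moreover have "(\<Sum>l. ennreal (averaging l j) * emeasure M (C l)) = ennreal (averaging j j) * emeasure M (C j)"
    and "(\<Sum>l. ennreal (averaging j l) * emeasure M (C l)) = ennreal (averaging j j) * emeasure M (C j)"
    by (rule suminf_finite[of "{j}", simplified]; simp add: averaging_def)+
  ultimately show "(\<Sum>l. ennreal (averaging l j) * emeasure M (C l)) = 1"
    and "(\<Sum>l. ennreal (averaging j l) * emeasure M (C l)) \<le> 1"
    by simp_all
qed (simp add: averaging_def)

lemma integral_operator_averaging:
  assumes x: "x \<in> space M"
  shows "integral_operator M (cell_kernel averaging) h x
           = (\<integral>y. indicator (C (cell_index x)) y * h y \<partial>M) / measure M (C (cell_index x))"
proof -
  have "integral_operator M (cell_kernel averaging) h x
      = (\<integral>y. indicator (C (cell_index x)) y * h y / measure M (C (cell_index x)) \<partial>M)"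
    unfolding integral_operator_def cell_kernel_def averaging_def
    using cell_index_iff by (intro Bochner_Integration.integral_cong) (auto split: split_indicator)
  then show ?thesis
    by simp
qed

lemma integral_operator_averaging_step_AE:
  assumes "cell_step_function u"
  shows "AE x in M. integral_operator M (cell_kernel averaging) u x = u x"
proof -
  obtain n \<gamma> where u: "\<And>y. y \<in> space M \<Longrightarrow> u y = (\<Sum>j<n. \<gamma> j * indicator (C j) y)"
    using assms unfolding cell_step_function_def by blast
  show ?thesis
    using AE_space AE_emeasure_cell_nonzero
  proof eventually_elim
    case (elim x)
    then have "averaging (cell_index x) j * measure M (C j) = indicator (C j) x" for j
      using cell_index_iff[OF elim(1)] by (auto simp: averaging_def emeasure_cell split: split_indicator)
    then show ?case
      by (simp add: integral_operator_cell_kernel_step[OF elim(1) u] u[OF elim(1)] mult.assoc)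
  qed
qed

end

section \<open>Step functions on a common partition\<close>

lemma (in sigma_finite_measure) finite_measure_partition_extending:
  assumes sets_B: "\<And>j. j < n \<Longrightarrow> B j \<in> sets M"
    and emeasure_B: "\<And>j. j < n \<Longrightarrow> emeasure M (B j) < \<infinity>"
    and disjoint_B: "disjoint_family_on B {..<n}"
  obtains C where "finite_measure_partition M C" and "\<And>j. j < n \<Longrightarrow> C j = B j"
proof -
  obtain A :: "nat \<Rightarrow> 'a set" where sets_A: "range A \<subseteq> sets M" and cover_A: "(\<Union>i. A i) = space M"
    and emeasure_A: "\<And>i. emeasure M (A i) \<noteq> \<infinity>" and disjoint_A: "disjoint_family A"
    using sigma_finite_disjoint by blast
  define R where "R = space M - (\<Union>j<n. B j)"
  define C where "C j = (if j < n then B j else R \<inter> A (j - n))" for j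
  have "finite_measure_partition M C"
  proof
    fix k
    have "R \<in> sets M"
      unfolding R_def using sets_B by auto
    then show "C k \<in> sets M"
      using sets_B sets_A by (auto simp: C_def)
    have "emeasure M (R \<inter> A (k - n)) \<le> emeasure M (A (k - n))"
      using sets_A by (intro emeasure_mono) auto
    then show "emeasure M (C k) < \<infinity>"
      using emeasure_B emeasure_A by (auto simp: C_def less_top[symmetric] top_unique)
  next
    show "disjoint_family C"
      unfolding disjoint_family_on_def
    proof (intro ballI impI)
      fix j k :: nat
      assume "j \<noteq> k"
      have "A (j - n) \<inter> A (k - n) = {}" if "\<not> j < n" "\<not> k < n"
      proof -
        from that \<open>j \<noteq> k\<close> have "j - n \<noteq> k - n"
          by arith
        with disjoint_A show ?thesis
          by (simp add: disjoint_family_on_def)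
      qed
      with \<open>j \<noteq> k\<close> disjoint_B show "C j \<inter> C k = {}"
        by (auto simp: C_def R_def disjoint_family_on_def)
    qed
    have "B j \<subseteq> space M" if "j < n" for j
      using sets.sets_into_space[OF sets_B[OF that]] .
    then show "(\<Union>k. C k) = space M"
      using cover_A unfolding C_def R_def
      by (fastforce split: if_splits intro: exI[of _ "n + _"])
  qed
  then show ?thesis
    using that by (simp add: C_def)
qed

lemma simple_function_map_upt:
  assumes "\<And>i. i < p \<Longrightarrow> simple_function M (s i)"
  shows "simple_function M (\<lambda>y. map (\<lambda>i. s i y) [0..<p])"
  using assms
proof (induction p)
  case (Suc p)
  then show ?case
    using simple_function_compose2[of M "\<lambda>y. map (\<lambda>i. s i y) [0..<p]" "s p" "\<lambda>xs a. xs @ [a]"]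
    by simp
qed simp

lemma simple_functions_common_refinement:
  fixes s :: "nat \<Rightarrow> 'a \<Rightarrow> real"
  assumes "\<And>i. i < p \<Longrightarrow> Bochner_Integration.simple_bochner_integrable M (s i)"
  obtains n :: nat and B :: "nat \<Rightarrow> 'a set" and \<gamma> :: "nat \<Rightarrow> nat \<Rightarrow> real"
  where "\<And>j. j < n \<Longrightarrow> B j \<in> sets M" and "\<And>j. j < n \<Longrightarrow> emeasure M (B j) < \<infinity>"
    and "disjoint_family_on B {..<n}"
    and "\<And>i y. i < p \<Longrightarrow> y \<in> space M \<Longrightarrow> s i y = (\<Sum>j<n. \<gamma> i j * indicator (B j) y)"
proof -
  have simple: "\<And>i. i < p \<Longrightarrow> simple_function M (s i)"
    and finite_support: "\<And>i. i < p \<Longrightarrow> emeasure M {y \<in> space M. s i y \<noteq> 0} \<noteq> \<infinity>"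
    using assms by (auto simp: Bochner_Integration.simple_bochner_integrable.simps)
  define \<Phi> where "\<Phi> y = map (\<lambda>i. s i y) [0..<p]" for y
  have \<Phi>: "simple_function M \<Phi>"
    unfolding \<Phi>_def using simple by (rule simple_function_map_upt)
  obtain vs where set_vs: "set vs = \<Phi> ` space M - {replicate p 0}" and distinct_vs: "distinct vs"
    using finite_distinct_list[of "\<Phi> ` space M - {replicate p 0}"] simple_functionD(1)[OF \<Phi>] by blast
  define B where "B j = \<Phi> -` {vs ! j} \<inter> space M" for j
  have B_eq: "y \<in> B j \<longleftrightarrow> y \<in> space M \<and> \<Phi> y = vs ! j" for y j
    by (auto simp: B_def)
  show ?thesis
  proof (rule that[of "length vs" B "\<lambda>i j. vs ! j ! i"])
    fix j assume j: "j < length vs"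
    show "B j \<in> sets M"
      unfolding B_def by (rule simple_functionD(2)[OF \<Phi>])
    have "vs ! j \<noteq> replicate p 0"
      using j set_vs nth_mem by blast
    then have "B j \<subseteq> (\<Union>i<p. {y \<in> space M. s i y \<noteq> 0})"
      by (auto simp: B_eq \<Phi>_def list_eq_iff_nth_eq)
    moreover have "{y \<in> space M. s i y \<noteq> 0} \<in> sets M" if "i < p" for i
      using borel_measurable_simple_function[OF simple[OF that]] by measurable
    ultimately have "emeasure M (B j) \<le> (\<Sum>i<p. emeasure M {y \<in> space M. s i y \<noteq> 0})"
      by (intro order_trans[OF emeasure_mono emeasure_subadditive_finite]) auto
    also have "\<dots> < \<infinity>"
      using finite_support by (simp add: less_top[symmetric])
    finally show "emeasure M (B j) < \<infinity>" .
  next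
    show "disjoint_family_on B {..<length vs}"
      using distinct_vs by (auto simp: disjoint_family_on_def B_eq nth_eq_iff_index_eq)
  next
    fix i y assume i: "i < p" and y: "y \<in> space M"
    show "s i y = (\<Sum>j<length vs. vs ! j ! i * indicator (B j) y)"
    proof (cases "\<Phi> y \<in> set vs")
      case True
      then obtain k where k: "k < length vs" "\<Phi> y = vs ! k"
        by (auto simp: in_set_conv_nth)
      then have "(\<Sum>j<length vs. vs ! j ! i * indicator (B j) y) = vs ! k ! i"
        using distinct_vs y by (simp add: B_eq nth_eq_iff_index_eq indicator_def if_distrib sum.If_cases)
      also have "\<dots> = s i y"
        using k(2)[symmetric] i by (simp add: \<Phi>_def)
      finally show ?thesis ..
    next
      case False
      then have "\<Phi> y = replicate p 0"
        using y set_vs by blast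
      then show ?thesis
        using i False by (auto simp: B_eq \<Phi>_def list_eq_iff_nth_eq intro!: sum.neutral)
    qed
  qed
qed

lemma (in sigma_finite_measure) finite_measure_partition_stepping:
  fixes s :: "nat \<Rightarrow> 'a \<Rightarrow> real"
  assumes "\<And>i. i < p \<Longrightarrow> Bochner_Integration.simple_bochner_integrable M (s i)"
  obtains C where "finite_measure_partition M C"
    and "\<And>i. i < p \<Longrightarrow> finite_measure_partition.cell_step_function M C (s i)"
proof (rule simple_functions_common_refinement[OF assms])
  fix n :: nat and B :: "nat \<Rightarrow> 'a set" and \<gamma> :: "nat \<Rightarrow> nat \<Rightarrow> real"
  assume B: "\<And>j. j < n \<Longrightarrow> B j \<in> sets M" "\<And>j. j < n \<Longrightarrow> emeasure M (B j) < \<infinity>"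
      "disjoint_family_on B {..<n}"
    and s: "\<And>i y. i < p \<Longrightarrow> y \<in> space M \<Longrightarrow> s i y = (\<Sum>j<n. \<gamma> i j * indicator (B j) y)"
  show thesis
  proof (rule finite_measure_partition_extending[OF B])
    fix C assume C: "finite_measure_partition M C" and CB: "\<And>j. j < n \<Longrightarrow> C j = B j"
    show thesis
    proof (rule that[OF C])
      fix i assume "i < p"
      then have "\<forall>y\<in>space M. s i y = (\<Sum>j<n. \<gamma> i j * indicator (C j) y)"
        using s CB by (simp del: sum_mult_indicator)
      then show "finite_measure_partition.cell_step_function M C (s i)"
        unfolding finite_measure_partition.cell_step_function_def[OF C] by blast
    qed
  qed
qed

lemma simple_bochner_integrable_approximation:
  fixes f :: "'a \<Rightarrow> real"
  assumes "integrable M f" and "0 < e"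
  shows "\<exists>s. Bochner_Integration.simple_bochner_integrable M s \<and> L1_dist M f s < e"
proof -
  obtain x where "has_bochner_integral M f x"
    using assms(1) by (auto simp: integrable.simps)
  then obtain s where s: "\<And>i. Bochner_Integration.simple_bochner_integrable M (s i)"
    and lim: "(\<lambda>i. \<integral>\<^sup>+x. norm (f x - s i x) \<partial>M) \<longlonglongrightarrow> 0"
    unfolding has_bochner_integral.simps by blast
  obtain i where "(\<integral>\<^sup>+x. norm (f x - s i x) \<partial>M) < e"
    using order_tendstoD(2)[OF lim assms(2)] by (auto dest: eventually_happens'[OF sequentially_bot])
  with s show ?thesis
    unfolding L1_dist_def by auto
qed

section \<open>The transfer kernel of an operator on a partition\<close>

locale semi_doubly_stochastic_partition =
  semi_doubly_stochastic_operator M S + finite_measure_partition M C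
  for M :: "'a measure" and S and C
begin

definition cell_transfer :: "nat \<Rightarrow> nat \<Rightarrow> real" where
  "cell_transfer l j = (\<integral>x. indicator (C l) x * S (indicator (C j)) x \<partial>M)"

text \<open>Normalised so that \<open>cell_kernel transfer_density\<close> has mass \<open>cell_transfer l j\<close> on
  \<open>C l \<times> C j\<close>; again null cells get the junk value \<open>0\<close>.\<close>

definition transfer_density :: "nat \<Rightarrow> nat \<Rightarrow> real" where
  "transfer_density l j = cell_transfer l j / (measure M (C l) * measure M (C j))"

lemma S_cell_indicator_nonneg_AE: "AE x in M. 0 \<le> S (indicator (C j)) x"
  by (rule S_nonneg_AE[OF integrable_cell_indicator]) auto

lemma integrable_cell_transfer: "integrable M (\<lambda>x. indicator (C l) x * S (indicator (C j)) x)"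
  using integrable_mult_indicator[OF sets_cell integrable_S[OF integrable_cell_indicator]] by simp

lemma cell_transfer_nonneg: "0 \<le> cell_transfer l j"
  unfolding cell_transfer_def using S_cell_indicator_nonneg_AE[of j]
  by (intro integral_nonneg_AE) (auto elim!: eventually_mono)

lemma cell_transfer_null_left: "measure M (C l) = 0 \<Longrightarrow> cell_transfer l j = 0"
  unfolding cell_transfer_def using sets_cell
  by (intro integral_eq_zero_AE AE_I'[of "C l"]) (auto simp: emeasure_cell split: split_indicator)

lemma cell_transfer_null_right:
  assumes "measure M (C j) = 0"
  shows "cell_transfer l j = 0"
proof -
  have "AE x in M. indicator (C j) x = (0::real)"
    using assms sets_cell by (intro AE_I'[of "C j"]) (auto simp: emeasure_cell split: split_indicator)
  then have "AE x in M. S (indicator (C j)) x = S (\<lambda>y. 0) x"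
    by (intro S_cong_AE integrable_cell_indicator) auto
  with S_zero_AE show ?thesis
    unfolding cell_transfer_def by (intro integral_eq_zero_AE) (auto elim: eventually_elim2)
qed

lemma transfer_density_nonneg: "0 \<le> transfer_density l j"
  unfolding transfer_density_def using cell_transfer_nonneg by simp

lemma transfer_density_mult_left:
  "transfer_density l j * measure M (C l) = cell_transfer l j / measure M (C j)"
  by (cases "measure M (C l) = 0") (simp_all add: transfer_density_def cell_transfer_null_left)

lemma transfer_density_mult_right:
  "transfer_density l j * measure M (C j) = cell_transfer l j / measure M (C l)"
  by (cases "measure M (C j) = 0") (simp_all add: transfer_density_def cell_transfer_null_right)

lemma transfer_density_column_entry:
  "ennreal (transfer_density l j) * emeasure M (C l) = ennreal (cell_transfer l j) * ennreal (1 / measure M (C j))"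
  using transfer_density_mult_left[of l j] transfer_density_nonneg[of l j] cell_transfer_nonneg[of l j]
  by (simp add: emeasure_cell ennreal_mult[symmetric])

lemma transfer_density_row_entry:
  "ennreal (transfer_density l j) * emeasure M (C j) = ennreal (cell_transfer l j) * ennreal (1 / measure M (C l))"
  using transfer_density_mult_right[of l j] transfer_density_nonneg[of l j] cell_transfer_nonneg[of l j]
  by (simp add: emeasure_cell ennreal_mult[symmetric])

lemma suminf_cell_transfer_column: "(\<Sum>l. ennreal (cell_transfer l j)) = ennreal (measure M (C j))"
proof -
  have "(\<Sum>l. ennreal (cell_transfer l j)) = (\<Sum>l. \<integral>\<^sup>+x\<in>C l. ennreal (S (indicator (C j)) x) \<partial>M)"
  proof (intro suminf_cong)
    fix l
    have "ennreal (cell_transfer l j) = (\<integral>\<^sup>+x. ennreal (indicator (C l) x * S (indicator (C j)) x) \<partial>M)"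
      unfolding cell_transfer_def using S_cell_indicator_nonneg_AE[of j]
      by (intro nn_integral_eq_integral[symmetric] integrable_cell_transfer) (auto elim!: eventually_mono)
    then show "ennreal (cell_transfer l j) = (\<integral>\<^sup>+x\<in>C l. ennreal (S (indicator (C j)) x) \<partial>M)"
      by (simp add: indicator_mult_ennreal mult.commute)
  qed
  also have "\<dots> = (\<integral>\<^sup>+x. ennreal (S (indicator (C j)) x) \<partial>M)"
    using integrable_S[OF integrable_cell_indicator] by (intro nn_integral_sum_cells[symmetric]) auto
  also have "\<dots> = ennreal (\<integral>x. S (indicator (C j)) x \<partial>M)"
    using S_cell_indicator_nonneg_AE by (intro nn_integral_eq_integral integrable_S integrable_cell_indicator)
  also have "\<dots> = ennreal (measure M (C j))"
    using integral_S[OF integrable_cell_indicator] cell_subset_space by (simp add: Int_absorb2)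
  finally show ?thesis .
qed

lemma sum_cell_transfer_row_le: "(\<Sum>j<n. ennreal (cell_transfer l j)) \<le> ennreal (measure M (C l))"
proof -
  obtain g where adjoint: "adjoint_value M S (indicator (C l)) g"
    and g_le: "(\<integral>\<^sup>+x. ennreal (g x) \<partial>M) \<le> emeasure M (C l)"
    using S_adjoint_indicator[OF sets_cell] emeasure_cell_finite by blast
  define E where "E = (\<Union>j<n. C j)"
  have E_indicator: "indicator E = (\<lambda>y. \<Sum>j<n. 1 * indicator (C j) y :: real)"
    unfolding E_def using disjoint_family_on_mono[OF subset_UNIV disjoint_cells]
    by (auto simp: indicator_UN_disjoint)
  have "emeasure M E \<le> (\<Sum>j<n. emeasure M (C j))"
    unfolding E_def using sets_cell by (intro emeasure_subadditive_finite) auto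
  also have "\<dots> < \<infinity>"
    using emeasure_cell_finite by (simp add: less_top[symmetric])
  finally have E: "integrable M (indicator E :: 'a \<Rightarrow> real)"
    unfolding E_def using sets_cell by auto
  have "AE x in M. S (indicator E) x = (\<Sum>j<n. S (indicator (C j)) x)"
    using S_sum_AE[of n "\<lambda>j. indicator (C j)" "\<lambda>_. 1"] integrable_cell_indicator
    unfolding E_indicator by simp
  moreover note [measurable] = sets_cell borel_measurable_integrable[OF integrable_S[OF E]]
    borel_measurable_integrable[OF integrable_S[OF integrable_cell_indicator]]
  ultimately have "(\<integral>x. S (indicator E) x * indicator (C l) x \<partial>M)
      = (\<integral>x. (\<Sum>j<n. indicator (C l) x * S (indicator (C j)) x) \<partial>M)"
    by (intro integral_cong_AE)
       (auto simp: sum_distrib_left mult.commute elim!: eventually_mono simp del: sum_mult_indicator)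
  also have "\<dots> = (\<Sum>j<n. cell_transfer l j)"
    unfolding cell_transfer_def using integrable_cell_transfer by (subst Bochner_Integration.integral_sum) auto
  finally have "(\<Sum>j<n. cell_transfer l j) = (\<integral>x. S (indicator E) x * indicator (C l) x \<partial>M)" ..
  also have "\<dots> = (\<integral>x. indicator E x * g x \<partial>M)"
    using adjoint E unfolding adjoint_value_def by blast
  finally have "ennreal (\<Sum>j<n. cell_transfer l j) \<le> (\<integral>\<^sup>+x. ennreal (indicator E x * g x) \<partial>M)"
    using ennreal_integral_le_nn_integral by simp
  also have "\<dots> \<le> (\<integral>\<^sup>+x. ennreal (g x) \<partial>M)"
    by (intro nn_integral_mono) (simp split: split_indicator)
  also note g_le
  finally show ?thesis
    using cell_transfer_nonneg by (simp add: emeasure_cell sum_ennreal)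
qed

lemma semi_doubly_stochastic_transfer_kernel:
  "semi_doubly_stochastic_kernel M (cell_kernel transfer_density)"
proof (rule semi_doubly_stochastic_cell_kernel[OF transfer_density_nonneg])
  fix j
  assume "emeasure M (C j) \<noteq> 0"
  then have inverse: "ennreal (measure M (C j)) * ennreal (1 / measure M (C j)) = 1"
    by (simp add: emeasure_cell ennreal_mult[symmetric])
  then show "(\<Sum>l. ennreal (transfer_density l j) * emeasure M (C l)) = 1"
    by (simp add: transfer_density_column_entry suminf_cell_transfer_column)
  have "(\<Sum>l. ennreal (cell_transfer j l)) \<le> ennreal (measure M (C j))"
    using sum_cell_transfer_row_le by (intro suminf_le_const) (simp add: cell_transfer_nonneg)
  then show "(\<Sum>l. ennreal (transfer_density j l) * emeasure M (C l)) \<le> 1"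
    unfolding transfer_density_row_entry ennreal_suminf_multc
    using inverse by (metis mult_right_mono zero_le)
qed

lemma integral_operator_transfer_step:
  assumes g: "cell_step_function g" and x: "x \<in> space M"
  shows "integral_operator M (cell_kernel transfer_density) g x
           = integral_operator M (cell_kernel averaging) (S g) x"
proof -
  obtain n \<gamma> where g_eq: "\<And>y. y \<in> space M \<Longrightarrow> g y = (\<Sum>j<n. \<gamma> j * indicator (C j) y)"
    using g unfolding cell_step_function_def by blast
  define l where "l = cell_index x"
  have "AE y in M. S g y = S (\<lambda>y. \<Sum>j<n. \<gamma> j * indicator (C j) y) y"
    using g_eq integrable_cell_indicator
    by (intro S_cong_AE integrable_cell_step_function[OF g]) (auto simp del: sum_mult_indicator)
  with S_sum_AE[of n "\<lambda>j. indicator (C j)" \<gamma>, OF integrable_cell_indicator]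
  have "AE y in M. indicator (C l) y * S g y = (\<Sum>j<n. \<gamma> j * (indicator (C l) y * S (indicator (C j)) y))"
    by eventually_elim (auto simp: sum_distrib_left mult_ac simp del: sum_mult_indicator)
  then have "(\<integral>y. indicator (C l) y * S g y \<partial>M) = (\<Sum>j<n. \<gamma> j * cell_transfer l j)"
    using integrable_cell_transfer integrable_S[OF integrable_cell_step_function[OF g]] sets_cell
    by (subst integral_cong_AE[of _ _ "\<lambda>y. \<Sum>j<n. \<gamma> j * (indicator (C l) y * S (indicator (C j)) y)"])
       (auto simp: cell_transfer_def simp del: sum_mult_indicator)
  moreover have "integral_operator M (cell_kernel transfer_density) g x
      = (\<Sum>j<n. \<gamma> j * cell_transfer l j) / measure M (C l)"
    using integral_operator_cell_kernel_step[OF x g_eq, of transfer_density]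
    by (simp add: l_def mult.assoc transfer_density_mult_right sum_divide_distrib)
  ultimately show ?thesis
    by (simp add: integral_operator_averaging[OF x] l_def)
qed

lemma L1_dist_transfer_le:
  assumes f: "integrable M f" and g: "cell_step_function g" and u: "cell_step_function u"
    and fg: "L1_dist M f g \<le> \<delta>" and Sgu: "L1_dist M (S g) u \<le> \<delta>"
  shows "L1_dist M (integral_operator M (cell_kernel transfer_density) f) (S f) \<le> 4 * \<delta>"
proof -
  let ?T = "integral_operator M (cell_kernel transfer_density)"
  let ?A = "integral_operator M (cell_kernel averaging)"
  have int: "integrable M g" "integrable M u" "integrable M (S g)" "integrable M (S f)"
    using f integrable_cell_step_function[OF g] integrable_cell_step_function[OF u]
    by (auto intro: integrable_S)
  have meas: "?T f \<in> borel_measurable M" "?T g \<in> borel_measurable M"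
    "?A (S g) \<in> borel_measurable M" "?A u \<in> borel_measurable M"
    using f int semi_doubly_stochastic_transfer_kernel semi_doubly_stochastic_averaging_kernel
    by (auto intro!: integral_operator_measurable)
  have T_f_g: "L1_dist M (?T f) (?T g) \<le> \<delta>"
    using L1_dist_integral_operator_le[OF semi_doubly_stochastic_transfer_kernel f int(1)] fg by simp
  have A_Sg_u: "L1_dist M (?A (S g)) (?A u) \<le> \<delta>"
    using L1_dist_integral_operator_le[OF semi_doubly_stochastic_averaging_kernel int(3,2)] Sgu by simp
  have u_Sg: "L1_dist M u (S g) \<le> \<delta>"
    using Sgu by (simp add: L1_dist_commute)
  have Sg_Sf: "L1_dist M (S g) (S f) \<le> \<delta>"
    using L1_dist_S_le[OF int(1) f] fg by (simp add: L1_dist_commute)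
  have T_g: "L1_dist M (?T g) (S f) = L1_dist M (?A (S g)) (S f)"
    using integral_operator_transfer_step[OF g] by (intro L1_dist_cong_AE AE_I2) auto
  have A_u: "L1_dist M (?A u) (S f) = L1_dist M u (S f)"
    using integral_operator_averaging_step_AE[OF u] by (intro L1_dist_cong_AE) auto
  have "L1_dist M (?T f) (S f) \<le> L1_dist M (?T f) (?T g) + L1_dist M (?A (S g)) (S f)"
    using L1_dist_triangle[of "?T f" M "?T g" "S f"] meas int T_g by auto
  also have "\<dots> \<le> \<delta> + (L1_dist M (?A (S g)) (?A u) + L1_dist M u (S f))"
    using L1_dist_triangle[of "?A (S g)" M "?A u" "S f"] meas int A_u T_f_g by (auto intro: add_mono)
  also have "\<dots> \<le> \<delta> + (\<delta> + (L1_dist M u (S g) + L1_dist M (S g) (S f)))"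
    using L1_dist_triangle[of u M "S g" "S f"] int A_Sg_u by (auto intro!: add_mono)
  also have "\<dots> \<le> \<delta> + (\<delta> + (\<delta> + \<delta>))"
    using u_Sg Sg_Sf by (intro add_mono order.refl)
  also have "\<dots> = (1 + 1 + 1 + 1) * \<delta>"
    by (simp only: distrib_right mult_1 add.assoc)
  also have "(1 + 1 + 1 + 1 :: ennreal) = 4"
    by simp
  finally show ?thesis .
qed

end


section \<open>Approximation on finite-dimensional subspaces\<close>

lemma (in semi_doubly_stochastic_operator) transfer_kernel_approximation:
  fixes fs :: "nat \<Rightarrow> 'a \<Rightarrow> real" and N :: nat
  assumes "sigma_finite_measure M" and fs: "\<And>i. i < N \<Longrightarrow> integrable M (fs i)" and "0 < \<delta>"
  obtains K where "semi_doubly_stochastic_kernel M K"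
    and "\<And>i. i < N \<Longrightarrow> L1_dist M (integral_operator M K (fs i)) (S (fs i)) \<le> 4 * \<delta>"
proof -
  interpret sigma_finite_measure M by fact
  obtain g where g: "\<And>i. i < N \<Longrightarrow> Bochner_Integration.simple_bochner_integrable M (g i)"
    "\<And>i. i < N \<Longrightarrow> L1_dist M (fs i) (g i) < \<delta>"
    using simple_bochner_integrable_approximation[OF fs \<open>0 < \<delta>\<close>] by metis
  obtain u where u: "\<And>i. i < N \<Longrightarrow> Bochner_Integration.simple_bochner_integrable M (u i)"
    "\<And>i. i < N \<Longrightarrow> L1_dist M (S (g i)) (u i) < \<delta>"
    using simple_bochner_integrable_approximation[OF integrable_S[OF integrableI_simple_bochner_integrable[OF g(1)]] \<open>0 < \<delta>\<close>]
    by metis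
  define r where "r i = (if i < N then g i else u (i - N))" for i
  have "Bochner_Integration.simple_bochner_integrable M (r i)" if "i < N + N" for i
    using g(1) u(1) that by (cases "i < N") (auto simp: r_def)
  then obtain C where C: "finite_measure_partition M C"
    and steps: "\<And>i. i < N + N \<Longrightarrow> finite_measure_partition.cell_step_function M C (r i)"
    using finite_measure_partition_stepping by blast
  interpret semi_doubly_stochastic_partition M S C
    by (rule semi_doubly_stochastic_partition.intro) (rule semi_doubly_stochastic_operator_axioms C)+
  show ?thesis
  proof (rule that[OF semi_doubly_stochastic_transfer_kernel])
    fix i assume i: "i < N"
    then have "cell_step_function (g i)" "cell_step_function (u i)"
      using steps[of i] steps[of "N + i"] by (simp_all add: r_def)
    moreover have "L1_dist M (fs i) (g i) \<le> \<delta>" "L1_dist M (S (g i)) (u i) \<le> \<delta>"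
      using g(2)[OF i] u(2)[OF i] by simp_all
    ultimately show "L1_dist M (integral_operator M (cell_kernel transfer_density) (fs i)) (S (fs i)) \<le> 4 * \<delta>"
      by (rule L1_dist_transfer_le[OF fs[OF i]])
  qed
qed

lemma (in semi_doubly_stochastic_operator) L1_dist_integral_operator_S_lincomb_le:
  fixes N :: nat
  assumes "sigma_finite_measure M" and K: "semi_doubly_stochastic_kernel M K"
    and fs: "\<And>i. i < N \<Longrightarrow> integrable M (fs i)"
  shows "L1_dist M (integral_operator M K (\<lambda>y. \<Sum>i<N. c i * fs i y)) (S (\<lambda>y. \<Sum>i<N. c i * fs i y))
           \<le> (\<Sum>i<N. ennreal \<bar>c i\<bar> * L1_dist M (integral_operator M K (fs i)) (S (fs i)))"
proof -
  interpret sigma_finite_measure M by fact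
  have "L1_dist M (integral_operator M K (\<lambda>y. \<Sum>i<N. c i * fs i y)) (S (\<lambda>y. \<Sum>i<N. c i * fs i y))
      = L1_dist M (\<lambda>x. \<Sum>i<N. c i * integral_operator M K (fs i) x) (\<lambda>x. \<Sum>i<N. c i * S (fs i) x)"
    using integral_operator_sum_AE[OF K fs] S_sum_AE[OF fs] by (rule L1_dist_cong_AE)
  also have "\<dots> \<le> (\<Sum>i<N. ennreal \<bar>c i\<bar> * L1_dist M (integral_operator M K (fs i)) (S (fs i)))"
    using fs by (intro L1_dist_lincomb_le integral_operator_measurable[OF K])
      (auto intro: borel_measurable_integrable[OF integrable_S[OF fs]])
  finally show ?thesis .
qed

lemma (in semi_doubly_stochastic_operator) transfer_kernels_converge_on_span:
  fixes fs :: "nat \<Rightarrow> 'a \<Rightarrow> real" and N :: nat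
  assumes "sigma_finite_measure M" and fs: "\<And>i. i < N \<Longrightarrow> integrable M (fs i)"
  obtains K where "\<And>n. semi_doubly_stochastic_kernel M (K n)"
    and "\<And>c. (\<lambda>n. L1_dist M (integral_operator M (K n) (\<lambda>x. \<Sum>i<N. c i * fs i x))
                           (S (\<lambda>x. \<Sum>i<N. c i * fs i x))) \<longlonglongrightarrow> 0"
proof -
  define \<delta> :: "nat \<Rightarrow> ennreal" where "\<delta> n = ennreal (inverse (real (Suc n)))" for n
  have "\<exists>K. semi_doubly_stochastic_kernel M K \<and>
      (\<forall>i<N. L1_dist M (integral_operator M K (fs i)) (S (fs i)) \<le> 4 * \<delta> n)" for n
    using transfer_kernel_approximation[where fs = fs and N = N and \<delta> = "\<delta> n", OF assms(1) fs]
    by (auto simp: \<delta>_def)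
  then obtain K where K: "\<And>n. semi_doubly_stochastic_kernel M (K n)"
    and K_approx: "\<And>n i. i < N \<Longrightarrow> L1_dist M (integral_operator M (K n) (fs i)) (S (fs i)) \<le> 4 * \<delta> n"
    by metis
  have \<delta>_limit: "\<delta> \<longlonglongrightarrow> 0"
    unfolding \<delta>_def using tendsto_ennrealI[OF LIMSEQ_inverse_real_of_nat] by simp
  show ?thesis
  proof (rule that[OF K])
    fix c
    have bound: "L1_dist M (integral_operator M (K n) (\<lambda>x. \<Sum>i<N. c i * fs i x)) (S (\<lambda>x. \<Sum>i<N. c i * fs i x))
        \<le> (\<Sum>i<N. ennreal \<bar>c i\<bar> * (4 * \<delta> n))" for n
      using K_approx
      by (intro order.trans[OF L1_dist_integral_operator_S_lincomb_le[OF assms(1) K fs]] sum_mono mult_left_mono)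
        auto
    have "(\<lambda>n. ennreal \<bar>c i\<bar> * (4 * \<delta> n)) \<longlonglongrightarrow> ennreal \<bar>c i\<bar> * (4 * 0)" for i
      by (intro ennreal_tendsto_cmult \<delta>_limit) simp_all
    then have "(\<lambda>n. \<Sum>i<N. ennreal \<bar>c i\<bar> * (4 * \<delta> n)) \<longlonglongrightarrow> 0"
      by (intro tendsto_null_sum) simp
    then show "(\<lambda>n. L1_dist M (integral_operator M (K n) (\<lambda>x. \<Sum>i<N. c i * fs i x))
                            (S (\<lambda>x. \<Sum>i<N. c i * fs i x))) \<longlonglongrightarrow> 0"
      by (rule tendsto_sandwich[OF always_eventually always_eventually tendsto_const, rotated 2])
        (simp_all add: bound)
  qed
qed

theorem theorem4p11:
  fixes M :: "'a measure" and S :: "('a \<Rightarrow> real) \<Rightarrow> ('a \<Rightarrow> real)"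
    and F :: "('a \<Rightarrow> real) set"
  assumes "sigma_finite_measure M"
    and "semi_doubly_stochastic_op M S"
    and "finite_dim_L1_subspace M F"
  shows "\<exists>K :: nat \<Rightarrow> 'a \<Rightarrow> 'a \<Rightarrow> real.
           (\<forall>n. semi_doubly_stochastic_kernel M (K n)) \<and>
           (\<forall>f\<in>F. (\<lambda>n. \<integral>\<^sup>+x. ennreal \<bar>integral_operator M (K n) f x - S f x\<bar> \<partial>M)
                     \<longlonglongrightarrow> 0)"
proof -
  interpret semi_doubly_stochastic_operator M S
    by (rule semi_doubly_stochastic_operator.intro) fact
  obtain N :: nat and fs where fs: "\<And>i. i < N \<Longrightarrow> integrable M (fs i)"
    and F: "F = {(\<lambda>x. \<Sum>i<N. c i * fs i x) | c. True}"
    using assms(3) unfolding finite_dim_L1_subspace_def by blast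
  show ?thesis
  proof (rule transfer_kernels_converge_on_span[OF assms(1) fs])
    fix K
    assume "\<And>n. semi_doubly_stochastic_kernel M (K n)"
      and "\<And>c. (\<lambda>n. L1_dist M (integral_operator M (K n) (\<lambda>x. \<Sum>i<N. c i * fs i x))
                               (S (\<lambda>x. \<Sum>i<N. c i * fs i x))) \<longlonglongrightarrow> 0"
    then show ?thesis
      unfolding F L1_dist_def by blast
  qed
qed

end
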